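(* Let $G$ be a non-chordal bridged graph of diameter two, and let $C$ be an induced cycle of length $k\ge 6$ in $G$ of minimum length among all induced cycles of length greater than three. Then there exists a vertex $x\notin C$ adjacent to every vertex of $C$, so that $C\cup\{x\}$ induces a $k$-wheel.
   Context: $G$ is bridged if it contains no isometric cycle (a cycle whose distances equal distances in $G$) of length greater than three; in particular a bridged graph has no induced cycles of length 4 or 5. A graph is chordal if it has no induced cycle of length greater than three. A $k$-wheel is a $k$-cycle together with one extra vertex adjacent to all vertices of the cycle. *)

theory Defs
  imports Main
begin

definition graph :: "'a set \<Rightarrow> ('a \<Rightarrow> 'a \<Rightarrow> bool) \<Rightarrow> bool" where
  "graph V E \<longleftrightarrow> (\<forall>u v. E u v \<longrightarrow> u \<in> V \<and> v \<in> V \<and> u \<noteq> v \<and> E v u)"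

definition walk_len :: "'a set \<Rightarrow> ('a \<Rightarrow> 'a \<Rightarrow> bool) \<Rightarrow> nat \<Rightarrow> 'a \<Rightarrow> 'a \<Rightarrow> bool" where
  "walk_len V E n u v \<longleftrightarrow> (\<exists>p. length p = Suc n \<and> set p \<subseteq> V \<and> p ! 0 = u \<and> p ! n = v
      \<and> (\<forall>i<n. E (p ! i) (p ! Suc i)))"

definition connected_graph :: "'a set \<Rightarrow> ('a \<Rightarrow> 'a \<Rightarrow> bool) \<Rightarrow> bool" where
  "connected_graph V E \<longleftrightarrow> (\<forall>u\<in>V. \<forall>v\<in>V. \<exists>n. walk_len V E n u v)"

text \<open>Graph distance (meaningful for connected graphs).\<close>
definition gdist :: "'a set \<Rightarrow> ('a \<Rightarrow> 'a \<Rightarrow> bool) \<Rightarrow> 'a \<Rightarrow> 'a \<Rightarrow> nat" where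
  "gdist V E u v = (LEAST n. walk_len V E n u v)"

definition diameter_two :: "'a set \<Rightarrow> ('a \<Rightarrow> 'a \<Rightarrow> bool) \<Rightarrow> bool" where
  "diameter_two V E \<longleftrightarrow> connected_graph V E
     \<and> (\<forall>u\<in>V. \<forall>v\<in>V. gdist V E u v \<le> 2)
     \<and> (\<exists>u\<in>V. \<exists>v\<in>V. gdist V E u v = 2)"

definition is_cycle :: "'a set \<Rightarrow> ('a \<Rightarrow> 'a \<Rightarrow> bool) \<Rightarrow> 'a list \<Rightarrow> bool" where
  "is_cycle V E cs \<longleftrightarrow> distinct cs \<and> length cs \<ge> 3 \<and> set cs \<subseteq> V
     \<and> (\<forall>i<length cs. E (cs ! i) (cs ! ((i + 1) mod length cs)))"

definition induced_cycle :: "'a set \<Rightarrow> ('a \<Rightarrow> 'a \<Rightarrow> bool) \<Rightarrow> 'a list \<Rightarrow> bool" where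
  "induced_cycle V E cs \<longleftrightarrow> is_cycle V E cs
     \<and> (\<forall>i<length cs. \<forall>j<length cs. E (cs ! i) (cs ! j) \<longrightarrow>
          j = (i + 1) mod length cs \<or> i = (j + 1) mod length cs)"

definition cyc_dist :: "nat \<Rightarrow> nat \<Rightarrow> nat \<Rightarrow> nat" where
  "cyc_dist k i j = (let d = (if i \<le> j then j - i else i - j) in min d (k - d))"

definition isometric_cycle :: "'a set \<Rightarrow> ('a \<Rightarrow> 'a \<Rightarrow> bool) \<Rightarrow> 'a list \<Rightarrow> bool" where
  "isometric_cycle V E cs \<longleftrightarrow> is_cycle V E cs
     \<and> (\<forall>i<length cs. \<forall>j<length cs. gdist V E (cs ! i) (cs ! j) = cyc_dist (length cs) i j)"

definition bridged :: "'a set \<Rightarrow> ('a \<Rightarrow> 'a \<Rightarrow> bool) \<Rightarrow> bool" where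
  "bridged V E \<longleftrightarrow> (\<forall>cs. isometric_cycle V E cs \<longrightarrow> length cs \<le> 3)"

definition chordal :: "'a set \<Rightarrow> ('a \<Rightarrow> 'a \<Rightarrow> bool) \<Rightarrow> bool" where
  "chordal V E \<longleftrightarrow> (\<forall>cs. induced_cycle V E cs \<longrightarrow> length cs \<le> 3)"

end

theory Submission
  imports Defs
begin

text \<open>Take u = C!0 and v = C!3. They are at distance three on C, hence non-adjacent, so
  by diameter two they have a common neighbour x, which cannot lie on C. If x missed a vertex
  of C, then two cyclically consecutive neighbours of x on C at distance m \<ge> 2 along C would
  close, together with x, an induced cycle of length m + 2 > 3. Minimality of C forces
  m \<ge> k - 2, so all neighbours of x on C lie among three consecutive vertices of C, which is
  impossible for u and v.\<close>

lemma graph_sym: "graph V E \<Longrightarrow> E u v \<Longrightarrow> E v u"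
  unfolding graph_def by blast

lemma graph_irrefl: "graph V E \<Longrightarrow> \<not> E u u"
  unfolding graph_def by blast

lemma induced_cycle_edgeD:
  assumes "induced_cycle V E cs" "i < length cs" "j < length cs" "E (cs ! i) (cs ! j)"
  shows "j = (i + 1) mod length cs \<or> i = (j + 1) mod length cs"
  using assms unfolding induced_cycle_def by blast

lemma induced_cycle_rotate:
  assumes "induced_cycle V E cs"
  shows "induced_cycle V E (rotate r cs)"
proof -
  let ?k = "length cs" and ?D = "rotate r cs"
  define \<rho> where "\<rho> t = (r + t) mod ?k" for t
  have cyc: "is_cycle V E cs" using assms unfolding induced_cycle_def by blast
  hence k: "0 < ?k" unfolding is_cycle_def by linarith
  have D_nth: "?D ! t = cs ! \<rho> t" if "t < ?k" for t
    using that by (simp add: nth_rotate \<rho>_def)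
  have \<rho>_lt: "\<rho> t < ?k" for t using k by (simp add: \<rho>_def)
  have \<rho>_succ: "\<rho> ((t + 1) mod ?k) = (\<rho> t + 1) mod ?k" for t
    by (simp add: \<rho>_def mod_add_right_eq mod_Suc_eq)
  have succ_lt: "(t + 1) mod ?k < ?k" for t using k by simp
  have D_succ: "?D ! ((t + 1) mod ?k) = cs ! ((\<rho> t + 1) mod ?k)" for t
    unfolding D_nth[OF succ_lt] \<rho>_succ ..
  have D_edge: "E (?D ! t) (?D ! ((t + 1) mod ?k))" if "t < ?k" for t
    using cyc \<rho>_lt unfolding is_cycle_def D_nth[OF that] D_succ by blast
  have D_ind: "j = (i + 1) mod ?k \<or> i = (j + 1) mod ?k"
    if "i < ?k" "j < ?k" "E (?D ! i) (?D ! j)" for i j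
  proof -
    have "\<rho> j = (\<rho> i + 1) mod ?k \<or> \<rho> i = (\<rho> j + 1) mod ?k"
      using induced_cycle_edgeD[OF assms \<rho>_lt \<rho>_lt] that by (simp add: D_nth)
    hence "?D ! j = ?D ! ((i + 1) mod ?k) \<or> ?D ! i = ?D ! ((j + 1) mod ?k)"
      using that by (metis D_nth D_succ)
    moreover have "distinct ?D" using cyc unfolding is_cycle_def by simp
    ultimately show ?thesis using that succ_lt by (auto simp: nth_eq_iff_index_eq)
  qed
  show ?thesis
    using cyc D_edge D_ind unfolding induced_cycle_def is_cycle_def by simp
qed

lemma induced_cycle_shortcut:
  assumes G: "graph V E" and D: "induced_cycle V E D" and x: "x \<in> V" "x \<notin> set D"
    and m: "2 \<le> m" "m + 1 < length D"
    and x_first: "E x (D ! 0)" and x_last: "E x (D ! m)"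
    and x_gap: "\<And>i. 0 < i \<Longrightarrow> i < m \<Longrightarrow> \<not> E x (D ! i)"
  shows "induced_cycle V E (x # take (m + 1) D)"
proof -
  let ?k = "length D" and ?L = "x # take (m + 1) D"
  have cyc: "is_cycle V E D" using D unfolding induced_cycle_def by blast
  have L_len: "length ?L = m + 2" using m by simp
  have L_Suc: "?L ! Suc t = D ! t" if "t \<le> m" for t using that m by simp
  have D_arc_edge: "E (D ! t) (D ! Suc t)" if "t < m" for t
  proof -
    have "t < ?k" "(t + 1) mod ?k = Suc t" using that m by auto
    thus ?thesis using cyc unfolding is_cycle_def by metis
  qed
  have D_arc_ind: "t = s + 1 \<or> s = t + 1" if "s \<le> m" "t \<le> m" "E (D ! s) (D ! t)" for s t
    using induced_cycle_edgeD[OF D, of s t] that m by simp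
  have x_nbrs: "t = 0 \<or> t = m" if "t \<le> m" "E x (D ! t)" for t
    using that x_gap by fastforce
  have L_edge: "E (?L ! i) (?L ! ((i + 1) mod (m + 2)))" if "i < m + 2" for i
  proof (cases i)
    case 0
    thus ?thesis using x_first L_Suc[of 0] by simp
  next
    case (Suc t)
    show ?thesis
    proof (cases "t = m")
      case True
      thus ?thesis using Suc L_Suc[of m] graph_sym[OF G x_last] by simp
    next
      case False
      hence "t < m" "(i + 1) mod (m + 2) = Suc (Suc t)" using Suc that by auto
      thus ?thesis using Suc L_Suc[of t] L_Suc[of "Suc t"] D_arc_edge[of t] by simp
    qed
  qed
  have L_ind: "j = (i + 1) mod (m + 2) \<or> i = (j + 1) mod (m + 2)"
    if "i < m + 2" "j < m + 2" "E (?L ! i) (?L ! j)" for i j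
  proof (cases i; cases j)
    fix t assume "i = 0" "j = Suc t"
    thus ?thesis using that x_nbrs[of t] L_Suc[of t] by auto
  next
    fix s assume "i = Suc s" "j = 0"
    thus ?thesis using that x_nbrs[of s] L_Suc[of s] graph_sym[OF G] by auto
  next
    fix s t assume "i = Suc s" "j = Suc t"
    thus ?thesis using that D_arc_ind[of s t] L_Suc[of s] L_Suc[of t] by auto
  qed (use that graph_irrefl[OF G] in simp)
  have "distinct ?L" "set ?L \<subseteq> V"
    using cyc x unfolding is_cycle_def by (auto dest: in_set_takeD)
  thus ?thesis
    using L_len L_edge L_ind m unfolding induced_cycle_def is_cycle_def by (simp del: length_take)
qed

lemma ex_last_before_failure:
  fixes P :: "nat \<Rightarrow> bool"
  assumes "P 0" "\<not> P j"
  shows "\<exists>i<j. P i \<and> \<not> P (Suc i)"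
  using assms by (induction j) (auto simp: less_Suc_eq)

lemma cyclic_offset_mod:
  fixes a b k :: nat
  assumes "a < k" "b < k"
  shows "(k - b + a) mod k = (if b \<le> a then a - b else k - b + a)"
proof (cases "b \<le> a")
  case True
  hence "k - b + a = (a - b) + k" using assms by simp
  hence "(k - b + a) mod k = (a - b) mod k" by (simp only: mod_add_self2)
  thus ?thesis using True assms by simp
qed (use assms in simp)

lemma neighbours_near_first_vertex:
  assumes G: "graph V E" and D: "induced_cycle V E D" and x: "x \<in> V" "x \<notin> set D"
    and shortest: "\<forall>C'. induced_cycle V E C' \<and> 3 < length C' \<longrightarrow> length D \<le> length C'"
    and x_first: "E x (D ! 0)" and x_second: "\<not> E x (D ! 1)"
    and t: "t < length D" "E x (D ! t)"
  shows "t = 0 \<or> length D - 2 \<le> t"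
proof (rule ccontr)
  assume "\<not> ?thesis"
  hence t_mid: "0 < t" "t + 2 < length D" using t by auto
  define m where "m = (LEAST m. 0 < m \<and> E x (D ! m))"
  have m_nbr: "0 < m" "E x (D ! m)" and "m \<le> t"
    using LeastI[of "\<lambda>m. 0 < m \<and> E x (D ! m)" t] Least_le[of "\<lambda>m. 0 < m \<and> E x (D ! m)" t]
      t_mid t unfolding m_def by auto
  have gap: "\<not> E x (D ! i)" if "0 < i" "i < m" for i
    using not_less_Least[of i "\<lambda>m. 0 < m \<and> E x (D ! m)"] that unfolding m_def by blast
  have "m \<noteq> 1" using m_nbr x_second by auto
  hence "2 \<le> m" "m + 1 < length D" using m_nbr \<open>m \<le> t\<close> t_mid by auto
  hence "induced_cycle V E (x # take (m + 1) D)"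
    using induced_cycle_shortcut[OF G D x] x_first m_nbr gap by blast
  moreover have "length (x # take (m + 1) D) = m + 2" using \<open>m + 1 < length D\<close> by simp
  ultimately have "length D \<le> m + 2" using shortest \<open>2 \<le> m\<close> by fastforce
  thus False using \<open>m \<le> t\<close> t_mid by simp
qed

text \<open>(length C - a + i) mod length C is the number of steps along C from C ! a to C ! i.\<close>

lemma neighbours_in_window:
  assumes G: "graph V E" and C: "induced_cycle V E C" and x: "x \<in> V" "x \<notin> set C"
    and shortest: "\<forall>C'. induced_cycle V E C' \<and> 3 < length C' \<longrightarrow> length C \<le> length C'"
    and i: "i + 1 < length C" "E x (C ! i)" "\<not> E x (C ! (i + 1))"
    and a: "a < length C" "E x (C ! a)"
  shows "(length C - a + i) mod length C \<le> 2"
proof -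
  let ?k = "length C" and ?D = "rotate i C"
  have D_nth: "?D ! t = C ! ((i + t) mod ?k)" if "t < ?k" for t
    using that by (simp add: nth_rotate)
  have k: "0 < ?k" using i(1) by linarith
  have D_start: "?D ! 0 = C ! i" "?D ! 1 = C ! (i + 1)"
    using D_nth[of 0] D_nth[of 1] i(1) k by simp_all
  have pos_lt: "(?k - i + a) mod ?k < ?k" using k by simp
  have D_pos: "?D ! ((?k - i + a) mod ?k) = C ! a"
    using D_nth[OF pos_lt] a i by (simp add: mod_add_right_eq)
  have "(?k - i + a) mod ?k = 0 \<or> length ?D - 2 \<le> (?k - i + a) mod ?k"
    by (rule neighbours_near_first_vertex[OF G induced_cycle_rotate[OF C] x(1)])
      (use x(2) shortest i a D_start pos_lt D_pos in simp_all)
  moreover have "i < ?k" using i(1) by simp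
  ultimately show ?thesis
    unfolding cyclic_offset_mod[OF a(1) \<open>i < ?k\<close>] cyclic_offset_mod[OF \<open>i < ?k\<close> a(1)]
    using a(1) by (auto split: if_splits)
qed

lemma walk_len_gdist:
  assumes "connected_graph V E" "u \<in> V" "v \<in> V"
  shows "walk_len V E (gdist V E u v) u v"
  unfolding gdist_def by (rule LeastI_ex) (use assms in \<open>auto simp: connected_graph_def\<close>)

lemma walk_len_two_common_neighbour:
  assumes "walk_len V E 2 u v"
  shows "\<exists>x\<in>V. E u x \<and> E x v"
proof -
  obtain p where p: "length p = 3" "set p \<subseteq> V" "p ! 0 = u" "p ! 2 = v"
    "\<forall>i<2. E (p ! i) (p ! Suc i)"
    using assms unfolding walk_len_def by (auto simp: numeral_3_eq_3)
  hence "p ! 1 \<in> V" "E u (p ! 1)" "E (p ! 1) v"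
    by (auto simp: numeral_2_eq_2 dest: spec[of _ 0] spec[of _ 1])
  thus ?thesis by blast
qed

lemma diameter_two_common_neighbour:
  assumes "diameter_two V E" "u \<in> V" "v \<in> V" "u \<noteq> v" "\<not> E u v"
  shows "\<exists>x\<in>V. E u x \<and> E x v"
proof -
  let ?n = "gdist V E u v"
  obtain p where p: "length p = Suc ?n" "p ! 0 = u" "p ! ?n = v"
      "\<forall>i<?n. E (p ! i) (p ! Suc i)" and walk: "walk_len V E ?n u v"
    using walk_len_gdist[of V E u v] assms unfolding diameter_two_def walk_len_def by blast
  have "?n \<noteq> 0" using p(2,3) assms(4) by metis
  moreover have "?n \<noteq> 1" using p assms by (metis One_nat_def lessI)
  moreover have "?n \<le> 2" using assms unfolding diameter_two_def by blast
  ultimately have "?n = 2" by linarith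
  thus ?thesis using walk_len_two_common_neighbour walk by metis
qed

lemma induced_cycle_vertices_three_apart:
  assumes C: "induced_cycle V E C" and k: "5 \<le> length C"
  shows "C ! 0 \<in> V" "C ! 3 \<in> V" "C ! 0 \<noteq> C ! 3" "\<not> E (C ! 0) (C ! 3)"
proof -
  have "distinct C" "set C \<subseteq> V" using C unfolding induced_cycle_def is_cycle_def by simp_all
  moreover have k_pos: "0 < length C" "3 < length C" using k by linarith+
  ultimately show "C ! 0 \<in> V" "C ! 3 \<in> V" "C ! 0 \<noteq> C ! 3"
    using nth_mem[of _ C] by (blast, blast, simp add: nth_eq_iff_index_eq)
  show "\<not> E (C ! 0) (C ! 3)"
  proof
    assume "E (C ! 0) (C ! 3)"
    hence "3 = (0 + 1) mod length C \<or> 0 = (3 + 1) mod length C"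
      using induced_cycle_edgeD[OF C] k_pos by blast
    thus False using k by simp
  qed
qed

lemma neighbour_of_vertices_three_apart_off_cycle:
  assumes C: "induced_cycle V E C" and k: "6 \<le> length C"
    and x: "E x (C ! 0)" "E x (C ! 3)"
  shows "x \<notin> set C"
proof
  assume "x \<in> set C"
  then obtain j where j: "j < length C" "C ! j = x" by (auto simp: in_set_conv_nth)
  have "0 < length C" "3 < length C" using k by linarith+
  moreover have "E (C ! j) (C ! 0)" "E (C ! j) (C ! 3)" using j x by simp_all
  ultimately have "0 = (j + 1) mod length C \<or> j = (0 + 1) mod length C"
    "3 = (j + 1) mod length C \<or> j = (3 + 1) mod length C"
    using induced_cycle_edgeD[OF C j(1)] by blast+
  moreover have "(0 + 1) mod length C = 1" "(3 + 1) mod length C = 4" using k by simp_all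
  ultimately show False using j k by (auto simp: mod_Suc split: if_splits)
qed

theorem mainTheorem13:
  fixes V :: "'a set" and E :: "'a \<Rightarrow> 'a \<Rightarrow> bool" and C :: "'a list" and k :: nat
  assumes "graph V E"
    and "bridged V E"
    and "\<not> chordal V E"
    and "diameter_two V E"
    and "induced_cycle V E C"
    and "length C = k" and "k \<ge> 6"
    and "\<forall>C'. induced_cycle V E C' \<and> length C' > 3 \<longrightarrow> k \<le> length C'"
  shows "\<exists>x\<in>V. x \<notin> set C \<and> (\<forall>v\<in>set C. E x v)"
proof -
  note G = assms(1) and C = assms(5) and k = assms(6,7) and shortest = assms(8)[folded k(1)]
  have "C ! 0 \<in> V" "C ! 3 \<in> V" "C ! 0 \<noteq> C ! 3" "\<not> E (C ! 0) (C ! 3)"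
    using induced_cycle_vertices_three_apart[OF C] k by simp_all
  then obtain x where x: "x \<in> V" "E x (C ! 0)" "E x (C ! 3)"
    using diameter_two_common_neighbour[OF assms(4)] graph_sym[OF G] by blast
  have x_off: "x \<notin> set C"
    using neighbour_of_vertices_three_apart_off_cycle[OF C] x k by simp
  have "E x (C ! j)" if "j < k" for j
  proof (rule ccontr)
    assume "\<not> E x (C ! j)"
    then obtain i where i: "i < j" "E x (C ! i)" "\<not> E x (C ! (i + 1))"
      using ex_last_before_failure[of "\<lambda>i. E x (C ! i)"] x(2) by auto
    have "(k - 0 + i) mod k \<le> 2" "(k - 3 + i) mod k \<le> 2"
      using neighbours_in_window[OF G C x(1) x_off shortest, where i = i and a = 0]
        neighbours_in_window[OF G C x(1) x_off shortest, where i = i and a = 3]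
        i x that k by simp_all
    thus False unfolding cyclic_offset_mod[of 0 k i] cyclic_offset_mod[of 3 k i]
      using i that k by (auto split: if_splits)
  qed
  hence "\<forall>v\<in>set C. E x v" using k(1) by (auto simp: in_set_conv_nth)
  thus ?thesis using x(1) x_off by blast
qed

end
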